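(* Assume $\operatorname{rank}(X)=n$, let $m\ge\nu_n(X)$ be an integer, and let $A^\circ=[a_1^\circ\ \cdots\ a_s^\circ]\in\mathbb{R}^{n\times s}$ satisfy $\min_{i\in\mathbb{S}}|I_i(A^\circ)|\ge s\,m$. Let $$\gamma_m=\inf\big\{\|X_I^\top\eta\|_1:\eta\in\mathbb{R}^n,\ \|\eta\|_2=1,\ I\subset\mathbb{T},\ |I|\ge m\big\}.$$ If for some $r\in\{0,\ldots,N\}$ with $\xi_r(\varpi^N)<1/2$, $$\min_{i\ne j}\|a_i^\circ-a_j^\circ\|_2>\frac{2\,\delta_r(A^\circ)}{\gamma_m\big(1-2\xi_r(\varpi^N)\big)},$$ then $A^\circ$ and $\hat A$ are comparable over $\varpi^N$ for every $\hat A\in\arg\min_A\mathcal{J}(A)$.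
   Context: Data: integers $n,s,N\ge1$ and a dataset $\varpi^N=((x_1,y_1),\ldots,(x_N,y_N))$ with $x_t\in\mathbb{R}^n$, $y_t\in\mathbb{R}$; $X=[x_1\ \cdots\ x_N]\in\mathbb{R}^{n\times N}$, and $X_I$ denotes the submatrix of columns indexed by $I$. Let $\mathbb{T}=\{1,\ldots,N\}$, $\mathbb{S}=\{1,\ldots,s\}$. For $A=[a_1\ \cdots\ a_s]\in\mathbb{R}^{n\times s}$, $\sigma_A:\mathbb{T}\to\mathbb{S}$ is a switching signal satisfying $\sigma_A(t)\in\arg\min_{i\in\mathbb{S}}|y_t-x_t^\top a_i|$ for all $t$, selected uniquely by a fixed rule depending only on $A$ and the data (among all admissible choices, one maximizing $\min_{i}|I_i(A)|$, ties then broken by assigning the smallest admissible index). $I_i(A)=\{t\in\mathbb{T}:\sigma_A(t)=i\}$. $\phi(A)=\big(y_1-x_1^\top a_{\sigma_A(1)},\ldots,y_N-x_N^\top a_{\sigma_A(N)}\big)^\top$, $\mathcal{J}(A)=\|\phi(A)\|_1$, $\phi_{\mathcal{T}}(A)$ its subvector indexed by $\mathcal{T}\subset\mathbb{T}$. $\mathcal{S}_r=\{w\in\mathbb{R}^N:\|w\|_0\le r\}$, $\delta_r(A)=\inf_{w\in\mathcal{S}_r}\|\phi(A)-w\|_1$. The $r$-th concentration ratio is $$\xi_r(\varpi^N)=\sup\Big\{\frac{\|\phi_{\mathcal{T}}(A)-\phi_{\mathcal{T}}(A')\|_1}{\|\phi(A)-\phi(A')\|_1}: A,A'\in\mathbb{R}^{n\times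 s},\ \mathcal{T}\subset\mathbb{T},\ \phi(A)\ne\phi(A'),\ |\mathcal{T}|\le r\Big\}.$$ Genericity index: for $\operatorname{rank}(X)=n$, $\nu_n(X)$ is the smallest integer $m$ such that every submatrix formed by $m$ columns of $X$ has rank $n$. Comparability: $A,A'$ are comparable over $\varpi^N$ if there is a permutation $\pi$ of $\mathbb{S}$ with $|I_i(A)\cap I_{\pi(i)}(A')|\ge\nu_n(X)$ for all $i$. *)

theory Defs
  imports "HOL-Analysis.Analysis"
begin

text \<open>Conventions: the index set T is {1..N}, S is {1..s}. Regressor vectors
 x t :: real^'n (so n = CARD('n)), outputs y t :: real. A parameter matrix
 A = [a_1 ... a_s] is a function A :: nat => real^'n whose values on {1..s} are the
 columns (values outside {1..s} are irrelevant to every notion below).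
 Vectors in R^N are functions nat => real considered on {1..N}.\<close>

definition admissible_sw ::
  "nat \<Rightarrow> nat \<Rightarrow> (nat \<Rightarrow> real^'n) \<Rightarrow> (nat \<Rightarrow> real) \<Rightarrow> (nat \<Rightarrow> real^'n) \<Rightarrow> (nat \<Rightarrow> nat) set" where
  "admissible_sw s N x y A =
     {\<sigma>. (\<forall>t\<in>{1..N}. \<sigma> t \<in> {1..s} \<and>
            (\<forall>i\<in>{1..s}. \<bar>y t - x t \<bullet> A (\<sigma> t)\<bar> \<le> \<bar>y t - x t \<bullet> A i\<bar>))
        \<and> (\<forall>t. t \<notin> {1..N} \<longrightarrow> \<sigma> t = 0)}"

definition sw_score :: "nat \<Rightarrow> nat \<Rightarrow> (nat \<Rightarrow> nat) \<Rightarrow> nat" where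
  "sw_score s N \<sigma> = Min ((\<lambda>i. card {t\<in>{1..N}. \<sigma> t = i}) ` {1..s})"

definition max_sw ::
  "nat \<Rightarrow> nat \<Rightarrow> (nat \<Rightarrow> real^'n) \<Rightarrow> (nat \<Rightarrow> real) \<Rightarrow> (nat \<Rightarrow> real^'n) \<Rightarrow> (nat \<Rightarrow> nat) set" where
  "max_sw s N x y A =
     {\<sigma> \<in> admissible_sw s N x y A.
        \<forall>\<sigma>' \<in> admissible_sw s N x y A. sw_score s N \<sigma>' \<le> sw_score s N \<sigma>}"

text \<open>Tie-breaking: the lexicographically smallest (sigma(1), ..., sigma(N)),
 i.e. the smallest admissible index is assigned first.\<close>
definition sigma_sw ::
  "nat \<Rightarrow> nat \<Rightarrow> (nat \<Rightarrow> real^'n) \<Rightarrow> (nat \<Rightarrow> real) \<Rightarrow> (nat \<Rightarrow> real^'n) \<Rightarrow> nat \<Rightarrow> nat" where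
  "sigma_sw s N x y A = (THE \<sigma>. \<sigma> \<in> max_sw s N x y A \<and>
      (\<forall>\<sigma>' \<in> max_sw s N x y A. \<sigma>' \<noteq> \<sigma> \<longrightarrow>
         (\<exists>t\<in>{1..N}. \<sigma> t < \<sigma>' t \<and> (\<forall>u\<in>{1..N}. u < t \<longrightarrow> \<sigma> u = \<sigma>' u))))"

definition Iset ::
  "nat \<Rightarrow> nat \<Rightarrow> (nat \<Rightarrow> real^'n) \<Rightarrow> (nat \<Rightarrow> real) \<Rightarrow> (nat \<Rightarrow> real^'n) \<Rightarrow> nat \<Rightarrow> nat set" where
  "Iset s N x y A i = {t \<in> {1..N}. sigma_sw s N x y A t = i}"

definition phi ::
  "nat \<Rightarrow> nat \<Rightarrow> (nat \<Rightarrow> real^'n) \<Rightarrow> (nat \<Rightarrow> real) \<Rightarrow> (nat \<Rightarrow> real^'n) \<Rightarrow> nat \<Rightarrow> real" where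
  "phi s N x y A t = y t - x t \<bullet> A (sigma_sw s N x y A t)"

definition Jcost ::
  "nat \<Rightarrow> nat \<Rightarrow> (nat \<Rightarrow> real^'n) \<Rightarrow> (nat \<Rightarrow> real) \<Rightarrow> (nat \<Rightarrow> real^'n) \<Rightarrow> real" where
  "Jcost s N x y A = (\<Sum>t\<in>{1..N}. \<bar>phi s N x y A t\<bar>)"

definition delta_r ::
  "nat \<Rightarrow> nat \<Rightarrow> (nat \<Rightarrow> real^'n) \<Rightarrow> (nat \<Rightarrow> real) \<Rightarrow> nat \<Rightarrow> (nat \<Rightarrow> real^'n) \<Rightarrow> real" where
  "delta_r s N x y r A = Inf {(\<Sum>t\<in>{1..N}. \<bar>phi s N x y A t - w t\<bar>) | w :: nat \<Rightarrow> real.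
       card {t\<in>{1..N}. w t \<noteq> 0} \<le> r}"

definition xi_r ::
  "nat \<Rightarrow> nat \<Rightarrow> (nat \<Rightarrow> real^'n) \<Rightarrow> (nat \<Rightarrow> real) \<Rightarrow> nat \<Rightarrow> real" where
  "xi_r s N x y r = Sup {(\<Sum>t\<in>\<T>. \<bar>phi s N x y A t - phi s N x y A' t\<bar>) /
                         (\<Sum>t\<in>{1..N}. \<bar>phi s N x y A t - phi s N x y A' t\<bar>)
       | A A' \<T>. \<T> \<subseteq> {1..N} \<and> (\<exists>t\<in>{1..N}. phi s N x y A t \<noteq> phi s N x y A' t)
                 \<and> card \<T> \<le> r}"

definition nu_gen :: "nat \<Rightarrow> (nat \<Rightarrow> real^'n) \<Rightarrow> nat" where
  "nu_gen N x = (LEAST m. \<forall>I. I \<subseteq> {1..N} \<and> card I = m \<longrightarrow> dim (x ` I) = CARD('n))"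

definition comparable ::
  "nat \<Rightarrow> nat \<Rightarrow> (nat \<Rightarrow> real^'n) \<Rightarrow> (nat \<Rightarrow> real) \<Rightarrow> (nat \<Rightarrow> real^'n) \<Rightarrow> (nat \<Rightarrow> real^'n) \<Rightarrow> bool" where
  "comparable s N x y A A' = (\<exists>\<pi>. \<pi> permutes {1..s} \<and>
      (\<forall>i\<in>{1..s}. card (Iset s N x y A i \<inter> Iset s N x y A' (\<pi> i)) \<ge> nu_gen N x))"

definition gamma_m :: "nat \<Rightarrow> (nat \<Rightarrow> real^'n) \<Rightarrow> nat \<Rightarrow> real" where
  "gamma_m N x m = Inf {(\<Sum>t\<in>I. \<bar>x t \<bullet> \<eta>\<bar>) | \<eta> I. norm \<eta> = 1 \<and> I \<subseteq> {1..N} \<and> card I \<ge> m}"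

end

theory Submission
  imports Defs "HOL-Library.List_Lexorder"
begin

(* Let Ahat minimise J and e = phi(Ahat) - phi(A0). For an r-sparse w with support T, optimality of
   Ahat gives |e|_1 <= 2 |e_T|_1 + 2 |phi(A0) - w|_1, and the concentration ratio bounds |e_T|_1 by
   xi_r |e|_1; hence (1 - 2 xi_r) |e|_1 <= 2 delta_r(A0).
   On a cell I_i(A0) /\ I_k(Ahat) one has e_t = x_t . (a0_i - ahat_k), so a cell with at least m points
   forces gamma_m |a0_i - ahat_k| <= |e|_1; gamma_m > 0 since any m regressors contain nu_n(X) spanning
   ones. Each I_i(A0) has s m points spread over s cells, so some cell k = pi(i) receives m of them.
   If pi(i) = pi(j) for i ~= j, the triangle inequality gives gamma_m |a0_i - a0_j| <= |e|_1, against
   the separation hypothesis. So pi is a permutation, and m >= nu_n(X) yields comparability. *)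

section \<open>Switching signals\<close>

lemma map_upt_less_iff:
  fixes \<sigma> \<sigma>' :: "nat \<Rightarrow> 'a::linorder"
  shows "map \<sigma> [1..<Suc N] < map \<sigma>' [1..<Suc N] \<longleftrightarrow>
    (\<exists>t\<in>{1..N}. \<sigma> t < \<sigma>' t \<and> (\<forall>u\<in>{1..N}. u < t \<longrightarrow> \<sigma> u = \<sigma>' u))"
proof -
  have take_eq: "take i (map \<sigma> [1..<Suc N]) = take i (map \<sigma>' [1..<Suc N]) \<longleftrightarrow>
      (\<forall>u\<in>{1..N}. u \<le> i \<longrightarrow> \<sigma> u = \<sigma>' u)" if "i < N" for i
    using that by (auto simp: take_map min_def simp del: upt_Suc)
  have "map \<sigma> [1..<Suc N] < map \<sigma>' [1..<Suc N] \<longleftrightarrow>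
      (\<exists>i<N. take i (map \<sigma> [1..<Suc N]) = take i (map \<sigma>' [1..<Suc N]) \<and> \<sigma> (Suc i) < \<sigma>' (Suc i))"
    by (auto simp: list_less_def lexord_take_index_conv simp del: upt_Suc)
  also have "\<dots> \<longleftrightarrow> (\<exists>i<N. (\<forall>u\<in>{1..N}. u \<le> i \<longrightarrow> \<sigma> u = \<sigma>' u) \<and> \<sigma> (Suc i) < \<sigma>' (Suc i))"
    using take_eq by auto
  also have "\<dots> \<longleftrightarrow> (\<exists>t\<in>{1..N}. \<sigma> t < \<sigma>' t \<and> (\<forall>u\<in>{1..N}. u < t \<longrightarrow> \<sigma> u = \<sigma>' u))"
  proof
    assume "\<exists>i<N. (\<forall>u\<in>{1..N}. u \<le> i \<longrightarrow> \<sigma> u = \<sigma>' u) \<and> \<sigma> (Suc i) < \<sigma>' (Suc i)"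
    then show "\<exists>t\<in>{1..N}. \<sigma> t < \<sigma>' t \<and> (\<forall>u\<in>{1..N}. u < t \<longrightarrow> \<sigma> u = \<sigma>' u)"
      by (auto intro!: bexI[of _ "Suc i" for i])
  next
    assume "\<exists>t\<in>{1..N}. \<sigma> t < \<sigma>' t \<and> (\<forall>u\<in>{1..N}. u < t \<longrightarrow> \<sigma> u = \<sigma>' u)"
    then obtain t where "t \<in> {1..N}" "\<sigma> t < \<sigma>' t" "\<forall>u\<in>{1..N}. u < t \<longrightarrow> \<sigma> u = \<sigma>' u"
      by blast
    then show "\<exists>i<N. (\<forall>u\<in>{1..N}. u \<le> i \<longrightarrow> \<sigma> u = \<sigma>' u) \<and> \<sigma> (Suc i) < \<sigma>' (Suc i)"
      by (intro exI[of _ "t - 1"]) auto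
  qed
  finally show ?thesis .
qed

lemma ex1_lex_least:
  fixes M :: "(nat \<Rightarrow> 'a::linorder) set"
  assumes "finite M" "M \<noteq> {}"
    and agree: "\<And>\<sigma> \<sigma>' t. \<sigma> \<in> M \<Longrightarrow> \<sigma>' \<in> M \<Longrightarrow> t \<notin> {1..N} \<Longrightarrow> \<sigma> t = \<sigma>' t"
  shows "\<exists>!\<sigma>. \<sigma> \<in> M \<and> (\<forall>\<sigma>'\<in>M. \<sigma>' \<noteq> \<sigma> \<longrightarrow>
           (\<exists>t\<in>{1..N}. \<sigma> t < \<sigma>' t \<and> (\<forall>u\<in>{1..N}. u < t \<longrightarrow> \<sigma> u = \<sigma>' u)))"
proof -
  define L where "L \<sigma> = map \<sigma> [1..<Suc N]" for \<sigma> :: "nat \<Rightarrow> 'a"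
  have nth_L: "L \<sigma> ! (t - 1) = \<sigma> t" if "t \<in> {1..N}" for \<sigma> t
  proof -
    have "t - 1 < length [1..<Suc N]" using that by auto
    then show ?thesis using that by (simp only: L_def nth_map) (simp del: upt_Suc)
  qed
  have "inj_on L M"
  proof (rule inj_onI, rule ext)
    fix \<sigma> \<sigma>' t assume "\<sigma> \<in> M" "\<sigma>' \<in> M" "L \<sigma> = L \<sigma>'"
    then show "\<sigma> t = \<sigma>' t"
      using agree[of \<sigma> \<sigma>' t] nth_L[of t \<sigma>] nth_L[of t \<sigma>'] by (cases "t \<in> {1..N}") auto
  qed
  obtain \<sigma> where \<sigma>: "is_arg_min L (\<lambda>\<sigma>. \<sigma> \<in> M) \<sigma>"
    using ex_is_arg_min_if_finite[OF assms(1,2)] by blast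
  have "L \<sigma> < L \<sigma>'" if "\<sigma>' \<in> M" "\<sigma>' \<noteq> \<sigma>" for \<sigma>'
    using \<sigma> that inj_onD[OF \<open>inj_on L M\<close>, of \<sigma> \<sigma>'] by (force simp: is_arg_min_def)
  then have "\<sigma> \<in> M \<and> (\<forall>\<sigma>'\<in>M. \<sigma>' \<noteq> \<sigma> \<longrightarrow> L \<sigma> < L \<sigma>')"
    using \<sigma> by (simp add: is_arg_min_def)
  then show ?thesis
    unfolding map_upt_less_iff[symmetric] L_def[symmetric]
    by (metis less_asym)
qed

lemma admissible_sw_finite: "finite (admissible_sw s N x y A)"
  by (rule finite_subset[OF _ finite_set_of_finite_funs[of "{1..N}" "{1..s}" 0]])
     (auto simp: admissible_sw_def)

lemma admissible_sw_nonempty: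
  assumes "s \<ge> 1"
  shows "admissible_sw s N x y A \<noteq> {}"
proof -
  have "\<exists>i\<in>{1..s}. \<forall>j\<in>{1..s}. \<bar>y t - x t \<bullet> A i\<bar> \<le> \<bar>y t - x t \<bullet> A j\<bar>" for t
    using ex_is_arg_min_if_finite[of "{1..s}" "\<lambda>i. \<bar>y t - x t \<bullet> A i\<bar>"] assms
    by (force simp: is_arg_min_linorder)
  then obtain c where "\<And>t. c t \<in> {1..s} \<and> (\<forall>j\<in>{1..s}. \<bar>y t - x t \<bullet> A (c t)\<bar> \<le> \<bar>y t - x t \<bullet> A j\<bar>)"
    by metis
  then have "(\<lambda>t. if t \<in> {1..N} then c t else 0) \<in> admissible_sw s N x y A"
    by (auto simp: admissible_sw_def)
  then show ?thesis by blast
qed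

lemma max_sw_nonempty:
  assumes "s \<ge> 1"
  shows "max_sw s N x y A \<noteq> {}"
proof -
  obtain \<sigma> where \<sigma>: "\<sigma> \<in> admissible_sw s N x y A"
    "Max (sw_score s N ` admissible_sw s N x y A) = sw_score s N \<sigma>"
    using obtains_MAX[OF admissible_sw_finite admissible_sw_nonempty[OF assms]] .
  have "sw_score s N \<sigma>' \<le> sw_score s N \<sigma>" if "\<sigma>' \<in> admissible_sw s N x y A" for \<sigma>'
    unfolding \<sigma>(2)[symmetric] using that admissible_sw_finite by (intro Max_ge finite_imageI imageI)
  then have "\<sigma> \<in> max_sw s N x y A"
    using \<sigma>(1) unfolding max_sw_def by blast
  then show ?thesis by blast
qed

(* The description in sigma_sw has exactly one solution, so it never yields a junk value. *)
lemma sigma_sw_admissible: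
  assumes "s \<ge> 1"
  shows "sigma_sw s N x y A \<in> admissible_sw s N x y A"
proof -
  have sub: "max_sw s N x y A \<subseteq> admissible_sw s N x y A"
    by (auto simp: max_sw_def)
  have "\<exists>!\<sigma>. \<sigma> \<in> max_sw s N x y A \<and> (\<forall>\<sigma>'\<in>max_sw s N x y A. \<sigma>' \<noteq> \<sigma> \<longrightarrow>
           (\<exists>t\<in>{1..N}. \<sigma> t < \<sigma>' t \<and> (\<forall>u\<in>{1..N}. u < t \<longrightarrow> \<sigma> u = \<sigma>' u)))"
  proof (rule ex1_lex_least)
    show "finite (max_sw s N x y A)" using finite_subset[OF sub admissible_sw_finite] .
    show "max_sw s N x y A \<noteq> {}" using max_sw_nonempty[OF assms] .
    fix \<sigma> \<sigma>' t assume "\<sigma> \<in> max_sw s N x y A" "\<sigma>' \<in> max_sw s N x y A" "t \<notin> {1..N}"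
    then show "\<sigma> t = \<sigma>' t" by (auto simp: max_sw_def admissible_sw_def)
  qed
  then have "sigma_sw s N x y A \<in> max_sw s N x y A"
    unfolding sigma_sw_def by (rule theI'[THEN conjunct1])
  then show ?thesis using sub by blast
qed

lemma UN_Iset:
  assumes "s \<ge> 1"
  shows "(\<Union>k\<in>{1..s}. Iset s N x y A k) = {1..N}"
  using sigma_sw_admissible[OF assms, of N x y A] by (auto simp: Iset_def admissible_sw_def)

section \<open>Genericity and the constant gamma_m\<close>

lemma nu_gen_spans:
  fixes x :: "nat \<Rightarrow> real^'n"
  assumes rank: "dim (x ` {1..N}) = CARD('n)"
    and I: "I \<subseteq> {1..N}" "card I = nu_gen N x"
  shows "span (x ` I) = UNIV"
proof -
  have "\<forall>I. I \<subseteq> {1..N} \<and> card I = N \<longrightarrow> dim (x ` I) = CARD('n)"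
  proof (intro allI impI)
    fix I assume "I \<subseteq> {1..N} \<and> card I = N"
    then have "I = {1..N}" by (intro card_subset_eq) auto
    then show "dim (x ` I) = CARD('n)" using rank by simp
  qed
  then have "\<forall>I. I \<subseteq> {1..N} \<and> card I = nu_gen N x \<longrightarrow> dim (x ` I) = CARD('n)"
    unfolding nu_gen_def by (rule LeastI)
  then have "dim (x ` I) = DIM(real^'n)"
    using I by simp
  then show ?thesis
    using dim_eq_full by blast
qed

lemma spanning_sum_abs_inner_lower_bound:
  fixes v :: "'i \<Rightarrow> 'a::euclidean_space"
  assumes "finite J" and span: "span (v ` J) = UNIV"
  shows "\<exists>c>0. \<forall>\<eta>. norm \<eta> = 1 \<longrightarrow> c \<le> (\<Sum>t\<in>J. \<bar>v t \<bullet> \<eta>\<bar>)"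
proof -
  have pos: "0 < (\<Sum>t\<in>J. \<bar>v t \<bullet> \<eta>\<bar>)" if "\<eta> \<noteq> 0" for \<eta>
  proof (rule ccontr)
    assume "\<not> ?thesis"
    then have "(\<Sum>t\<in>J. \<bar>v t \<bullet> \<eta>\<bar>) = 0"
      by (simp add: antisym sum_nonneg)
    then have "\<forall>t\<in>J. v t \<bullet> \<eta> = 0"
      using \<open>finite J\<close> by (simp add: sum_nonneg_eq_0_iff)
    moreover have "\<eta> \<in> span (v ` J)"
      using span by simp
    ultimately have "orthogonal \<eta> \<eta>"
      by (intro orthogonal_to_span[of \<eta> "v ` J"]) (auto simp: orthogonal_def inner_commute)
    then show False
      using that by (simp add: orthogonal_def)
  qed
  obtain u :: 'a where "norm u = 1"
    using vector_choose_size[of 1] by auto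
  then have "sphere (0::'a) 1 \<noteq> {}"
    by auto
  moreover have "continuous_on (sphere 0 1) (\<lambda>\<eta>::'a. \<Sum>t\<in>J. \<bar>v t \<bullet> \<eta>\<bar>)"
    by (intro continuous_intros)
  ultimately obtain \<eta>0 where "\<eta>0 \<in> sphere 0 1"
    "\<forall>\<eta>\<in>sphere 0 1. (\<Sum>t\<in>J. \<bar>v t \<bullet> \<eta>0\<bar>) \<le> (\<Sum>t\<in>J. \<bar>v t \<bullet> \<eta>\<bar>)"
    using continuous_attains_inf[OF compact_sphere] by blast
  moreover have "\<eta>0 \<noteq> 0"
    using \<open>\<eta>0 \<in> sphere 0 1\<close> by auto
  ultimately show ?thesis
    using pos[of \<eta>0] by (intro exI[of _ "\<Sum>t\<in>J. \<bar>v t \<bullet> \<eta>0\<bar>"]) auto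
qed

lemma gamma_m_pos:
  fixes x :: "nat \<Rightarrow> real^'n"
  assumes rank: "dim (x ` {1..N}) = CARD('n)" and m: "nu_gen N x \<le> m" "m \<le> N"
  shows "gamma_m N x m > 0"
proof -
  define \<J> where "\<J> = {J. J \<subseteq> {1..N} \<and> card J = nu_gen N x}"
  have "finite \<J>"
    unfolding \<J>_def by (rule finite_subset[of _ "Pow {1..N}"]) auto
  have "\<forall>J\<in>\<J>. \<exists>c>0. \<forall>\<eta>::real^'n. norm \<eta> = 1 \<longrightarrow> c \<le> (\<Sum>t\<in>J. \<bar>x t \<bullet> \<eta>\<bar>)"
    using nu_gen_spans[OF rank] finite_subset
    by (intro ballI spanning_sum_abs_inner_lower_bound) (auto simp: \<J>_def)
  then obtain c where c: "\<forall>J\<in>\<J>. c J > 0 \<and> (\<forall>\<eta>::real^'n. norm \<eta> = 1 \<longrightarrow> c J \<le> (\<Sum>t\<in>J. \<bar>x t \<bullet> \<eta>\<bar>))"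
    by metis
  define c0 where "c0 = Min (insert 1 (c ` \<J>))"
  have "c0 > 0"
    unfolding c0_def using c \<open>finite \<J>\<close> by (subst Min_gr_iff) auto
  define G where "G = {(\<Sum>t\<in>I. \<bar>x t \<bullet> \<eta>\<bar>) | \<eta> I. norm \<eta> = 1 \<and> I \<subseteq> {1..N} \<and> card I \<ge> m}"
  obtain u :: "real^'n" where "norm u = 1"
    using vector_choose_size[of 1] by auto
  then have "(\<Sum>t\<in>{1..N}. \<bar>x t \<bullet> u\<bar>) \<in> G"
    unfolding G_def using m(2) by (intro CollectI exI[of _ u] exI[of _ "{1..N}"]) auto
  then have "G \<noteq> {}"
    by blast
  moreover have "c0 \<le> g" if "g \<in> G" for g
  proof -
    obtain \<eta> I where g: "g = (\<Sum>t\<in>I. \<bar>x t \<bullet> \<eta>\<bar>)" "norm \<eta> = 1" "I \<subseteq> {1..N}" "card I \<ge> m"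
      using \<open>g \<in> G\<close> unfolding G_def by blast
    obtain J where J: "J \<subseteq> I" "card J = nu_gen N x"
      using obtain_subset_with_card_n[of "nu_gen N x" I] g(4) m(1) by auto
    then have "J \<in> \<J>"
      using g(3) by (auto simp: \<J>_def)
    have "c0 \<le> c J"
      unfolding c0_def using \<open>J \<in> \<J>\<close> \<open>finite \<J>\<close> by (intro Min_le) auto
    also have "\<dots> \<le> (\<Sum>t\<in>J. \<bar>x t \<bullet> \<eta>\<bar>)"
      using c \<open>J \<in> \<J>\<close> g(2) by blast
    also have "\<dots> \<le> g"
      unfolding g(1) using J(1) g(3) finite_subset by (intro sum_mono2) auto
    finally show ?thesis .
  qed
  ultimately have "c0 \<le> Inf G"
    by (rule cInf_greatest)
  then show ?thesis
    using \<open>c0 > 0\<close> by (simp add: gamma_m_def G_def)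
qed

lemma gamma_m_mult_norm_le:
  fixes x :: "nat \<Rightarrow> real^'n"
  assumes "I \<subseteq> {1..N}" "m \<le> card I"
  shows "gamma_m N x m * norm v \<le> (\<Sum>t\<in>I. \<bar>x t \<bullet> v\<bar>)"
proof (cases "v = 0")
  case False
  define G where "G = {(\<Sum>t\<in>I. \<bar>x t \<bullet> \<eta>\<bar>) | \<eta> I. norm \<eta> = 1 \<and> I \<subseteq> {1..N} \<and> card I \<ge> m}"
  have "(\<Sum>t\<in>I. \<bar>x t \<bullet> (v /\<^sub>R norm v)\<bar>) \<in> G"
    unfolding G_def using assms False by fastforce
  moreover have "bdd_below G"
    unfolding G_def by (rule bdd_belowI[of _ 0]) (auto intro: sum_nonneg)
  ultimately have "gamma_m N x m \<le> (\<Sum>t\<in>I. \<bar>x t \<bullet> (v /\<^sub>R norm v)\<bar>)"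
    unfolding gamma_m_def G_def[symmetric] by (rule cInf_lower)
  also have "\<dots> = (\<Sum>t\<in>I. \<bar>x t \<bullet> v\<bar>) / norm v"
    by (simp add: abs_mult divide_inverse sum_distrib_left mult.commute)
  finally show ?thesis
    using False by (simp add: pos_le_divide_eq)
qed simp

section \<open>Residuals of a minimiser\<close>

lemma sum_abs_phi_diff_le_xi_r:
  assumes "T \<subseteq> {1..N}" "card T \<le> r"
  shows "(\<Sum>t\<in>T. \<bar>phi s N x y A t - phi s N x y A' t\<bar>)
    \<le> xi_r s N x y r * (\<Sum>t\<in>{1..N}. \<bar>phi s N x y A t - phi s N x y A' t\<bar>)"
proof -
  define d where "d t = \<bar>phi s N x y A t - phi s N x y A' t\<bar>" for t
  define E where "E = (\<Sum>t\<in>{1..N}. d t)"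
  have "(\<Sum>t\<in>T. d t) \<le> E"
    unfolding E_def using assms(1) by (intro sum_mono2) (auto simp: d_def)
  show ?thesis
  proof (cases "E = 0")
    case False
    define R where "R = {(\<Sum>t\<in>\<T>. \<bar>phi s N x y A t - phi s N x y A' t\<bar>) /
                         (\<Sum>t\<in>{1..N}. \<bar>phi s N x y A t - phi s N x y A' t\<bar>)
       | A A' \<T>. \<T> \<subseteq> {1..N} \<and> (\<exists>t\<in>{1..N}. phi s N x y A t \<noteq> phi s N x y A' t)
                 \<and> card \<T> \<le> r}"
    have "\<exists>t\<in>{1..N}. phi s N x y A t \<noteq> phi s N x y A' t"
      using False unfolding E_def d_def by (metis (no_types, lifting) abs_0 diff_self sum.neutral)
    then have "(\<Sum>t\<in>T. d t) / E \<in> R"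
      unfolding R_def E_def d_def using assms by blast
    moreover have "bdd_above R"
    proof (rule bdd_aboveI)
      fix z assume "z \<in> R"
      then obtain A A' \<T> where "\<T> \<subseteq> {1..N}" and z: "z = (\<Sum>t\<in>\<T>. \<bar>phi s N x y A t - phi s N x y A' t\<bar>) /
                         (\<Sum>t\<in>{1..N}. \<bar>phi s N x y A t - phi s N x y A' t\<bar>)"
        unfolding R_def by blast
      then have "(\<Sum>t\<in>\<T>. \<bar>phi s N x y A t - phi s N x y A' t\<bar>)
          \<le> (\<Sum>t\<in>{1..N}. \<bar>phi s N x y A t - phi s N x y A' t\<bar>)"
        by (intro sum_mono2) auto
      moreover have "0 \<le> (\<Sum>t\<in>{1..N}. \<bar>phi s N x y A t - phi s N x y A' t\<bar>)"
        by (simp add: sum_nonneg)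
      ultimately show "z \<le> 1"
        unfolding z by (smt (verit) divide_le_eq_1)
    qed
    ultimately have "(\<Sum>t\<in>T. d t) / E \<le> xi_r s N x y r"
      unfolding xi_r_def R_def[symmetric] by (rule cSup_upper)
    moreover have "E > 0"
      using False by (simp add: E_def d_def order_less_le sum_nonneg)
    ultimately show ?thesis
      by (simp add: E_def d_def divide_le_eq mult.commute)
  qed (use \<open>(\<Sum>t\<in>T. d t) \<le> E\<close> in \<open>simp add: E_def d_def\<close>)
qed

lemma sparse_approximation_bound:
  fixes p q w :: "'a \<Rightarrow> real"
  assumes "finite U"
    and q_le_p: "(\<Sum>t\<in>U. \<bar>q t\<bar>) \<le> (\<Sum>t\<in>U. \<bar>p t\<bar>)"
    and concentrated: "(\<Sum>t\<in>{t\<in>U. w t \<noteq> 0}. \<bar>q t - p t\<bar>) \<le> \<xi> * (\<Sum>t\<in>U. \<bar>q t - p t\<bar>)"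
  shows "(1 - 2 * \<xi>) * (\<Sum>t\<in>U. \<bar>q t - p t\<bar>) \<le> 2 * (\<Sum>t\<in>U. \<bar>p t - w t\<bar>)"
proof -
  define T where "T = {t\<in>U. w t \<noteq> 0}"
  define C where "C = {t\<in>U. w t = 0}"
  have U: "U = T \<union> C" "T \<inter> C = {}" and "finite T" "finite C"
    using \<open>finite U\<close> unfolding T_def C_def by auto
  have split: "(\<Sum>t\<in>U. f t) = (\<Sum>t\<in>T. f t) + (\<Sum>t\<in>C. f t)" for f :: "'a \<Rightarrow> real"
    unfolding U(1) using \<open>finite T\<close> \<open>finite C\<close> U(2) by (rule sum.union_disjoint)
  have "(\<Sum>t\<in>T. \<bar>p t\<bar>) \<le> (\<Sum>t\<in>T. \<bar>q t\<bar>) + (\<Sum>t\<in>T. \<bar>q t - p t\<bar>)"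
    unfolding sum.distrib[symmetric] by (rule sum_mono) linarith
  moreover have "(\<Sum>t\<in>C. \<bar>q t - p t\<bar>) \<le> (\<Sum>t\<in>C. \<bar>q t\<bar>) + (\<Sum>t\<in>C. \<bar>p t\<bar>)"
    unfolding sum.distrib[symmetric] by (rule sum_mono) linarith
  moreover have "(\<Sum>t\<in>C. \<bar>p t\<bar>) \<le> (\<Sum>t\<in>U. \<bar>p t - w t\<bar>)"
  proof -
    have "(\<Sum>t\<in>C. \<bar>p t\<bar>) = (\<Sum>t\<in>C. \<bar>p t - w t\<bar>)"
      by (rule sum.cong) (auto simp: C_def)
    also have "\<dots> \<le> (\<Sum>t\<in>U. \<bar>p t - w t\<bar>)"
      using \<open>finite U\<close> by (intro sum_mono2) (auto simp: C_def)
    finally show ?thesis .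
  qed
  \<comment> \<open>with e = q - p: |e_C| <= |q_C| + |p_C| and |q_C| <= |p| - |q_T| <= |p_C| + |e_T|\<close>
  ultimately show ?thesis
    using q_le_p concentrated split[of "\<lambda>t. \<bar>q t\<bar>"] split[of "\<lambda>t. \<bar>p t\<bar>"]
      split[of "\<lambda>t. \<bar>q t - p t\<bar>"]
    unfolding T_def[symmetric] by argo
qed

lemma Jcost_le_imp_phi_dist_le_delta_r:
  assumes "Jcost s N x y Ahat \<le> Jcost s N x y A"
  shows "(1 - 2 * xi_r s N x y r) * (\<Sum>t\<in>{1..N}. \<bar>phi s N x y Ahat t - phi s N x y A t\<bar>)
    \<le> 2 * delta_r s N x y r A"
proof -
  define D where "D = {(\<Sum>t\<in>{1..N}. \<bar>phi s N x y A t - w t\<bar>) | w :: nat \<Rightarrow> real.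
       card {t\<in>{1..N}. w t \<noteq> 0} \<le> r}"
  have "(\<Sum>t\<in>{1..N}. \<bar>phi s N x y A t - 0\<bar>) \<in> D"
    unfolding D_def by (intro CollectI exI[of _ "\<lambda>_. 0"]) auto
  then have "D \<noteq> {}"
    by blast
  moreover have "(1 - 2 * xi_r s N x y r) * (\<Sum>t\<in>{1..N}. \<bar>phi s N x y Ahat t - phi s N x y A t\<bar>) / 2 \<le> d"
    if "d \<in> D" for d
  proof -
    obtain w where w: "card {t\<in>{1..N}. w t \<noteq> 0} \<le> r" "d = (\<Sum>t\<in>{1..N}. \<bar>phi s N x y A t - w t\<bar>)"
      using \<open>d \<in> D\<close> unfolding D_def by blast
    have "(1 - 2 * xi_r s N x y r) * (\<Sum>t\<in>{1..N}. \<bar>phi s N x y Ahat t - phi s N x y A t\<bar>) \<le> 2 * d"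
      unfolding w(2)
    proof (rule sparse_approximation_bound)
      show "(\<Sum>t\<in>{1..N}. \<bar>phi s N x y Ahat t\<bar>) \<le> (\<Sum>t\<in>{1..N}. \<bar>phi s N x y A t\<bar>)"
        using assms by (simp add: Jcost_def)
      show "(\<Sum>t\<in>{t \<in> {1..N}. w t \<noteq> 0}. \<bar>phi s N x y Ahat t - phi s N x y A t\<bar>)
          \<le> xi_r s N x y r * (\<Sum>t\<in>{1..N}. \<bar>phi s N x y Ahat t - phi s N x y A t\<bar>)"
        using w(1) by (intro sum_abs_phi_diff_le_xi_r) auto
    qed simp
    then show ?thesis
      by simp
  qed
  ultimately have "(1 - 2 * xi_r s N x y r) * (\<Sum>t\<in>{1..N}. \<bar>phi s N x y Ahat t - phi s N x y A t\<bar>) / 2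
      \<le> Inf D"
    by (rule cInf_greatest)
  then show ?thesis
    unfolding delta_r_def D_def by simp
qed

section \<open>Cells and comparability\<close>

lemma card_pigeonhole_cover:
  assumes "finite A" "A \<subseteq> (\<Union>k\<in>K. B k)" "finite K" "K \<noteq> {}" "card K * m \<le> card A"
  shows "\<exists>k\<in>K. m \<le> card (A \<inter> B k)"
proof (rule ccontr)
  assume "\<not> ?thesis"
  then have small: "\<forall>k\<in>K. card (A \<inter> B k) < m"
    by auto
  have "A = (\<Union>k\<in>K. A \<inter> B k)"
    using assms(2) by blast
  then have "card A \<le> (\<Sum>k\<in>K. card (A \<inter> B k))"
    by (metis card_UN_le[OF assms(3)])
  also have "\<dots> < (\<Sum>k\<in>K. m)"
    using small assms(3,4) by (intro sum_strict_mono) auto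
  finally show False
    using assms(5) by simp
qed

lemma inj_on_endo_permutes:
  assumes "finite S" "inj_on f S" "f ` S \<subseteq> S"
  shows "(\<lambda>i. if i \<in> S then f i else i) permutes S"
proof (rule bij_imp_permutes)
  have "inj_on (\<lambda>i. if i \<in> S then f i else i) S"
    using assms(2) by (simp add: inj_on_def)
  moreover have "(\<lambda>i. if i \<in> S then f i else i) ` S = S"
    using endo_inj_surj[OF assms(1,3,2)] by (simp add: image_def)
  ultimately show "bij_betw (\<lambda>i. if i \<in> S then f i else i) S S"
    by (simp add: bij_betw_def)
qed simp

lemma phi_diff_on_cell:
  assumes "t \<in> Iset s N x y A i \<inter> Iset s N x y B k"
  shows "phi s N x y B t - phi s N x y A t = x t \<bullet> (A i - B k)"
  using assms by (simp add: Iset_def phi_def inner_diff_right)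

lemma gamma_m_mult_norm_centres_le_phi_dist:
  assumes "0 \<le> gamma_m N x m" "i \<noteq> j"
    and "m \<le> card (Iset s N x y A i \<inter> Iset s N x y B k)"
    and "m \<le> card (Iset s N x y A j \<inter> Iset s N x y B k)"
  shows "gamma_m N x m * norm (A i - A j) \<le> (\<Sum>t\<in>{1..N}. \<bar>phi s N x y B t - phi s N x y A t\<bar>)"
proof -
  define K where "K i = Iset s N x y A i \<inter> Iset s N x y B k" for i
  have K_sub: "K i \<subseteq> {1..N}" for i
    by (auto simp: K_def Iset_def)
  have cell: "gamma_m N x m * norm (A i - B k) \<le> (\<Sum>t\<in>K i. \<bar>phi s N x y B t - phi s N x y A t\<bar>)"
    if "m \<le> card (K i)" for i
  proof -
    have "(\<Sum>t\<in>K i. \<bar>phi s N x y B t - phi s N x y A t\<bar>) = (\<Sum>t\<in>K i. \<bar>x t \<bullet> (A i - B k)\<bar>)"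
      by (rule sum.cong) (simp_all add: K_def phi_diff_on_cell)
    then show ?thesis
      using gamma_m_mult_norm_le[OF K_sub that] by simp
  qed
  have "norm (A i - A j) \<le> norm (A i - B k) + norm (A j - B k)"
    using norm_triangle_ineq4[of "A i - B k" "A j - B k"] by simp
  then have "gamma_m N x m * norm (A i - A j)
      \<le> gamma_m N x m * norm (A i - B k) + gamma_m N x m * norm (A j - B k)"
    using assms(1) by (metis distrib_left mult_left_mono)
  also have "\<dots> \<le> (\<Sum>t\<in>K i \<union> K j. \<bar>phi s N x y B t - phi s N x y A t\<bar>)"
  proof -
    have "K i \<inter> K j = {}"
      using \<open>i \<noteq> j\<close> by (auto simp: K_def Iset_def)
    moreover have "finite (K i)" "finite (K j)"
      using K_sub finite_subset by blast+
    ultimately show ?thesis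
      using cell assms(3,4) by (simp add: K_def sum.union_disjoint add_mono)
  qed
  also have "\<dots> \<le> (\<Sum>t\<in>{1..N}. \<bar>phi s N x y B t - phi s N x y A t\<bar>)"
    using K_sub by (intro sum_mono2) auto
  finally show ?thesis .
qed

lemma card_Iset_le: "card (Iset s N x y A i) \<le> N"
proof -
  have "card (Iset s N x y A i) \<le> card {1..N}"
    by (rule card_mono) (auto simp: Iset_def)
  then show ?thesis
    by simp
qed

lemma comparable_if_separated_cells:
  assumes "nu_gen N x \<le> m" "0 \<le> gamma_m N x m"
    and cells: "\<forall>i\<in>{1..s}. \<pi> i \<in> {1..s} \<and> m \<le> card (Iset s N x y A i \<inter> Iset s N x y B (\<pi> i))"
    and far: "\<And>i j. i \<in> {1..s} \<Longrightarrow> j \<in> {1..s} \<Longrightarrow> i \<noteq> j \<Longrightarrow>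
      (\<Sum>t\<in>{1..N}. \<bar>phi s N x y B t - phi s N x y A t\<bar>) < gamma_m N x m * norm (A i - A j)"
  shows "comparable s N x y A B"
proof -
  have "inj_on \<pi> {1..s}"
  proof (rule inj_onI, rule ccontr)
    fix i j assume ij: "i \<in> {1..s}" "j \<in> {1..s}" "\<pi> i = \<pi> j" "i \<noteq> j"
    have "gamma_m N x m * norm (A i - A j) \<le> (\<Sum>t\<in>{1..N}. \<bar>phi s N x y B t - phi s N x y A t\<bar>)"
    proof (rule gamma_m_mult_norm_centres_le_phi_dist[where k = "\<pi> i"])
      show "m \<le> card (Iset s N x y A i \<inter> Iset s N x y B (\<pi> i))"
        using cells ij(1) by simp
      show "m \<le> card (Iset s N x y A j \<inter> Iset s N x y B (\<pi> i))"
        using cells ij(2,3) by simp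
    qed fact+
    then show False
      using far[OF ij(1,2,4)] by simp
  qed
  then have "(\<lambda>i. if i \<in> {1..s} then \<pi> i else i) permutes {1..s}"
    using cells by (intro inj_on_endo_permutes) auto
  then show ?thesis
    unfolding comparable_def using cells assms(1)
    by (intro exI[of _ "\<lambda>i. if i \<in> {1..s} then \<pi> i else i"]) auto
qed

theorem lemma7:
  fixes s N m r :: nat and x :: "nat \<Rightarrow> real^'n" and y :: "nat \<Rightarrow> real"
    and A0 :: "nat \<Rightarrow> real^'n"
  assumes "s \<ge> 1" and "N \<ge> 1"
    and rank: "dim (x ` {1..N}) = CARD('n)"
    and m: "m \<ge> nu_gen N x"
    and A0: "\<forall>i\<in>{1..s}. card (Iset s N x y A0 i) \<ge> s * m"
    and r: "r \<le> N" and xi: "xi_r s N x y r < 1/2"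
    and sep: "\<forall>i\<in>{1..s}. \<forall>j\<in>{1..s}. i \<noteq> j \<longrightarrow>
       norm (A0 i - A0 j) > 2 * delta_r s N x y r A0 / (gamma_m N x m * (1 - 2 * xi_r s N x y r))"
  shows "\<forall>Ahat. (\<forall>A. Jcost s N x y Ahat \<le> Jcost s N x y A) \<longrightarrow> comparable s N x y A0 Ahat"
proof (intro allI impI)
  fix Ahat assume "\<forall>A. Jcost s N x y Ahat \<le> Jcost s N x y A"
  define \<gamma> where "\<gamma> = gamma_m N x m"
  define \<xi> where "\<xi> = xi_r s N x y r"
  define E where "E = (\<Sum>t\<in>{1..N}. \<bar>phi s N x y Ahat t - phi s N x y A0 t\<bar>)"
  have "m \<le> s * m" "s * m \<le> card (Iset s N x y A0 1)"
    using A0 \<open>s \<ge> 1\<close> by simp_all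
  then have "m \<le> N"
    using card_Iset_le[of s N x y A0 1] by linarith
  then have "\<gamma> > 0"
    unfolding \<gamma>_def using gamma_m_pos rank m by blast
  have "0 < 1 - 2 * \<xi>"
    using xi by (simp add: \<xi>_def)
  have "(1 - 2 * \<xi>) * E \<le> 2 * delta_r s N x y r A0"
    unfolding \<xi>_def E_def using \<open>\<forall>A. _\<close> by (intro Jcost_le_imp_phi_dist_le_delta_r) blast
  also have "\<dots> < (1 - 2 * \<xi>) * (\<gamma> * norm (A0 i - A0 j))"
    if "i \<in> {1..s}" "j \<in> {1..s}" "i \<noteq> j" for i j
    using sep that \<open>\<gamma> > 0\<close> \<open>0 < 1 - 2 * \<xi>\<close>
    by (simp add: \<gamma>_def \<xi>_def pos_divide_less_eq algebra_simps)
  finally have far: "E < \<gamma> * norm (A0 i - A0 j)" if "i \<in> {1..s}" "j \<in> {1..s}" "i \<noteq> j" for i j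
    using that \<open>0 < 1 - 2 * \<xi>\<close> by simp
  have "\<forall>i\<in>{1..s}. \<exists>k\<in>{1..s}. m \<le> card (Iset s N x y A0 i \<inter> Iset s N x y Ahat k)"
    using A0 UN_Iset[OF \<open>s \<ge> 1\<close>, of N x y Ahat]
    by (intro ballI card_pigeonhole_cover) (auto simp: Iset_def)
  then obtain \<pi> where "\<forall>i\<in>{1..s}. \<pi> i \<in> {1..s} \<and> m \<le> card (Iset s N x y A0 i \<inter> Iset s N x y Ahat (\<pi> i))"
    by metis
  then show "comparable s N x y A0 Ahat"
    using m \<open>\<gamma> > 0\<close> far unfolding \<gamma>_def E_def by (intro comparable_if_separated_cells) auto
qed

end
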